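(* Let $f:R\to S$ be a faithfully flat ring homomorphism. If $S$ is Cohen-Macaulay, then so is $R$.
   Context: All rings are commutative with identity. For $x\in R$ let $C(x)$ be the complex $0\to R\to R_x\to 0$ ($R$ in degree $0$, natural localization map); for a finite sequence $\mathbf x=x_1,\dots,x_\ell$ put $C(\mathbf x)=C(x_1)\otimes_R\cdots\otimes_R C(x_\ell)$ and let $H^i_{\mathbf x}(M)$ be the $i$th cohomology of $C(\mathbf x)\otimes_R M$; $\ell(\mathbf x)=\ell$. Let $K(x)$ be $0\to R\xrightarrow{x}R\to 0$ (degrees $1,0$), $K(\mathbf x)=K(x_1)\otimes\cdots\otimes K(x_\ell)$, $H_i(\mathbf x)$ its homology. For $m\ge n$ the chain map $K(\mathbf x^m)\to K(\mathbf x^n)$ ($\mathbf x^m=x_1^m,\dots,x_\ell^m$) is the tensor product of the maps $K(x_i^m)\to K(x_i^n)$ given by multiplication by $x_i^{m-n}$ in degree $1$ and identity in degree $0$. $\mathbf x$ is weakly proregular if for every $n$ there is $m\ge n$ with $H_i(\mathbf x^m)\to H_i(\mathbf x^n)$ zero for all $i\ge1$. $\mathbf x$ is a parameter sequence on $R$ if it is weakly proregular, $(\mathbf x)R\neq R$, and $H^{\ell(\mathbf x)}_{\mathbf x}(R)_p\neq0$ for every prime $p\supseteq(\mathbf x)R$ (the empty sequence is a parameter sequence). It is a strong parameter sequence if $x_1,\dots,x_i$ is a parameter sequence for each $i=1,\dots,\ell(\mathbf x)$. A regular sequence on $M$: each $x_i$ is a non-zero-divisor on $M/(x_1,\dots,x_{i-1})M$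 and $M\neq(\mathbf x)M$. A ring $R$ is Cohen-Macaulay if every strong parameter sequence on $R$ is a regular sequence on $R$. *)

theory Defs
  imports Main
begin

(* Rings: a commutative ring with identity R is rendered as a type 'a :: comm_ring_1
   (the whole type is the ring). Finite sequences x_1,...,x_l are lists, indexed 0..<l. *)

definition ring_homo :: "('a::comm_ring_1 \<Rightarrow> 'b::comm_ring_1) \<Rightarrow> bool" where
  "ring_homo f \<longleftrightarrow> f 1 = 1 \<and> (\<forall>a b. f (a + b) = f a + f b) \<and> (\<forall>a b. f (a * b) = f a * f b)"

definition is_ideal :: "'a::comm_ring_1 set \<Rightarrow> bool" where
  "is_ideal I \<longleftrightarrow> 0 \<in> I \<and> (\<forall>a\<in>I. \<forall>b\<in>I. a + b \<in> I) \<and> (\<forall>r. \<forall>a\<in>I. r * a \<in> I)"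

definition prime_ideal :: "'a::comm_ring_1 set \<Rightarrow> bool" where
  "prime_ideal p \<longleftrightarrow> is_ideal p \<and> p \<noteq> UNIV \<and> (\<forall>a b. a * b \<in> p \<longrightarrow> a \<in> p \<or> b \<in> p)"

definition gen_ideal :: "'a::comm_ring_1 list \<Rightarrow> 'a set" where
  "gen_ideal xs = {y. \<exists>r :: nat \<Rightarrow> 'a. y = (\<Sum>i<length xs. r i * xs ! i)}"

text \<open>Flatness of S over R (via f), by the equational criterion of flatness
  (a relation sum_i a_i y_i = 0 with a_i in R, y_i in S is trivial).\<close>
definition flat_hom :: "('a::comm_ring_1 \<Rightarrow> 'b::comm_ring_1) \<Rightarrow> bool" where
  "flat_hom f \<longleftrightarrow>
     (\<forall>(n::nat) (a :: nat \<Rightarrow> 'a) (y :: nat \<Rightarrow> 'b).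
        (\<Sum>i<n. f (a i) * y i) = 0 \<longrightarrow>
        (\<exists>(m::nat) (b :: nat \<Rightarrow> nat \<Rightarrow> 'a) (z :: nat \<Rightarrow> 'b).
            (\<forall>i<n. y i = (\<Sum>j<m. f (b i j) * z j)) \<and>
            (\<forall>j<m. (\<Sum>i<n. a i * b i j) = 0)))"

definition faithfully_flat_hom :: "('a::comm_ring_1 \<Rightarrow> 'b::comm_ring_1) \<Rightarrow> bool" where
  "faithfully_flat_hom f \<longleftrightarrow> ring_homo f \<and> flat_hom f \<and>
     (\<forall>p :: 'a set. prime_ideal p \<longrightarrow> (\<exists>q :: 'b set. prime_ideal q \<and> f -` q = p))"

text \<open>A chain of degree i is a family of coefficients indexed by the basis vectors
  e_S = e_{j_1} \<otimes> ... \<otimes> e_{j_i} (S = {j_1 < ... < j_i} \<subseteq> {0..<l}); coefficients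
  vanish outside i-element subsets of {0..<l}.\<close>
definition kchain :: "'a::comm_ring_1 list \<Rightarrow> nat \<Rightarrow> (nat set \<Rightarrow> 'a) \<Rightarrow> bool" where
  "kchain xs i c \<longleftrightarrow> (\<forall>S. c S \<noteq> 0 \<longrightarrow> S \<subseteq> {..<length xs} \<and> card S = i)"

text \<open>Differential: d(e_S) = sum over j in S of (-1)^{#{k in S. k < j}} x_j e_{S - {j}}.\<close>
definition kdiff :: "'a::comm_ring_1 list \<Rightarrow> (nat set \<Rightarrow> 'a) \<Rightarrow> (nat set \<Rightarrow> 'a)" where
  "kdiff xs c = (\<lambda>T. if T \<subseteq> {..<length xs} then
       (\<Sum>j\<in>{..<length xs} - T. (-1) ^ card {k\<in>T. k < j} * xs ! j * c (insert j T)) else 0)"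

definition kcycle :: "'a::comm_ring_1 list \<Rightarrow> nat \<Rightarrow> (nat set \<Rightarrow> 'a) \<Rightarrow> bool" where
  "kcycle xs i c \<longleftrightarrow> kchain xs i c \<and> kdiff xs c = (\<lambda>_. 0)"

definition kboundary :: "'a::comm_ring_1 list \<Rightarrow> nat \<Rightarrow> (nat set \<Rightarrow> 'a) \<Rightarrow> bool" where
  "kboundary xs i c \<longleftrightarrow> (\<exists>b. kchain xs (Suc i) b \<and> c = kdiff xs b)"

definition seq_pow :: "'a::comm_ring_1 list \<Rightarrow> nat \<Rightarrow> 'a list" where
  "seq_pow xs n = map (\<lambda>x. x ^ n) xs"

text \<open>The chain map K(x^m) \<rightarrow> K(x^n) (m \<ge> n): on e_S multiplication by prod_{j in S} x_j^(m-n).\<close>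
definition kmap :: "'a::comm_ring_1 list \<Rightarrow> nat \<Rightarrow> nat \<Rightarrow> (nat set \<Rightarrow> 'a) \<Rightarrow> (nat set \<Rightarrow> 'a)" where
  "kmap xs m n c = (\<lambda>S. (\<Prod>j\<in>S. (xs ! j) ^ (m - n)) * c S)"

text \<open>The induced map H_i(x^m) \<rightarrow> H_i(x^n) is zero: cycles are sent to boundaries.\<close>
definition koszul_hom_map_zero :: "'a::comm_ring_1 list \<Rightarrow> nat \<Rightarrow> nat \<Rightarrow> nat \<Rightarrow> bool" where
  "koszul_hom_map_zero xs m n i \<longleftrightarrow>
     (\<forall>z. kcycle (seq_pow xs m) i z \<longrightarrow> kboundary (seq_pow xs n) i (kmap xs m n z))"

definition weakly_proregular :: "'a::comm_ring_1 list \<Rightarrow> bool" where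
  "weakly_proregular xs \<longleftrightarrow>
     (\<forall>n. \<exists>m\<ge>n. \<forall>i\<ge>1. koszul_hom_map_zero xs m n i)"

text \<open>C(x) = C(x_1) \<otimes> ... \<otimes> C(x_l) has C^{l-1} = \<Oplus>_j R_{y_j} with y_j = prod_{i \<noteq> j} x_i
  and C^l = R_x with x = prod_i x_i; H^l_x(R) = R_x / image(C^{l-1}).
  An element of R_x is a fraction r / x^k; the element b_j / y_j^K of R_{y_j} maps
  (up to sign) to b_j x_j^K / x^K in R_x. Fractions in R_x are equal iff
  a / x^k = a' / x^k' \<longleftrightarrow> \<exists>t. x^t (a x^k' - a' x^k) = 0.
  cech_top_zero xs r k: the class of r/x^k in H^l_x(R) is zero.\<close>
definition cech_top_zero :: "'a::comm_ring_1 list \<Rightarrow> 'a \<Rightarrow> nat \<Rightarrow> bool" where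
  "cech_top_zero xs r k \<longleftrightarrow>
     (\<exists>(b :: nat \<Rightarrow> 'a) (K::nat) (t::nat).
        prod_list xs ^ t * (r * prod_list xs ^ K - (\<Sum>j<length xs. b j * (xs ! j) ^ K) * prod_list xs ^ k) = 0)"

text \<open>H^l_x(R)_p \<noteq> 0: some element m/s (s \<notin> p) of the localization is nonzero,
  i.e. there is m \<in> H^l_x(R) with u m \<noteq> 0 for all u \<notin> p. Every m is the class of
  some r/x^k, and u (r/x^k) = (u r)/x^k.\<close>
definition cech_top_local_nonzero :: "'a::comm_ring_1 list \<Rightarrow> 'a set \<Rightarrow> bool" where
  "cech_top_local_nonzero xs p \<longleftrightarrow> (\<exists>r k. \<forall>u. u \<notin> p \<longrightarrow> \<not> cech_top_zero xs (u * r) k)"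

definition parameter_seq :: "'a::comm_ring_1 list \<Rightarrow> bool" where
  "parameter_seq xs \<longleftrightarrow> xs = [] \<or>
     (weakly_proregular xs \<and> gen_ideal xs \<noteq> UNIV \<and>
      (\<forall>p. prime_ideal p \<and> gen_ideal xs \<subseteq> p \<longrightarrow> cech_top_local_nonzero xs p))"

definition strong_parameter_seq :: "'a::comm_ring_1 list \<Rightarrow> bool" where
  "strong_parameter_seq xs \<longleftrightarrow> (\<forall>i\<in>{1..length xs}. parameter_seq (take i xs))"

definition regular_seq :: "'a::comm_ring_1 list \<Rightarrow> bool" where
  "regular_seq xs \<longleftrightarrow>
     (\<forall>i<length xs. \<forall>a. xs ! i * a \<in> gen_ideal (take i xs) \<longrightarrow> a \<in> gen_ideal (take i xs)) \<and>
     gen_ideal xs \<noteq> UNIV"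

definition cohen_macaulay :: "'a::comm_ring_1 itself \<Rightarrow> bool" where
  "cohen_macaulay _ \<longleftrightarrow> (\<forall>xs :: 'a list. strong_parameter_seq xs \<longrightarrow> regular_seq xs)"

end

theory Submission
  imports Defs
begin

(* Flat base change along f carries parameter sequences of R to parameter sequences of S.
   Weak proregularity survives because, by the equational criterion applied to the finite
   linear system that defines Koszul cycles, every cycle of K(f x) is an S-linear combination
   of images of cycles of K(x). Non-vanishing of the top Cech cohomology at a prime q of S
   reduces to the same statement at the contraction of q, because flatness gives
   (I : a)S = (IS : f a). Faithful flatness (every prime of R lies under a prime of S) then
   gives f^-1(IS) = I for every finitely generated ideal I, and with it regularity of a
   sequence descends from S to R. *)

lemma is_idealD:
  assumes "is_ideal I"
  shows is_ideal_zero: "0 \<in> I"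
    and is_ideal_add: "a \<in> I \<Longrightarrow> b \<in> I \<Longrightarrow> a + b \<in> I"
    and is_ideal_mult_left: "a \<in> I \<Longrightarrow> r * a \<in> I"
    and is_ideal_mult_right: "a \<in> I \<Longrightarrow> a * r \<in> I"
  using assms unfolding is_ideal_def by (auto simp: mult.commute[of a])

lemma is_ideal_sum: "is_ideal I \<Longrightarrow> (\<And>j. j \<in> A \<Longrightarrow> g j \<in> I) \<Longrightarrow> sum g A \<in> I"
  unfolding is_ideal_def by (induction A rule: infinite_finite_induct) auto

lemma is_ideal_lincomb:
  "is_ideal I \<Longrightarrow> (\<And>j. j < m \<Longrightarrow> a j \<in> I) \<Longrightarrow> (\<Sum>j<m. a j * z j) \<in> I"
  by (auto intro: is_ideal_sum is_ideal_mult_right)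

lemma is_ideal_eq_UNIV_iff: "is_ideal I \<Longrightarrow> I = UNIV \<longleftrightarrow> 1 \<in> I"
  unfolding is_ideal_def by (metis UNIV_I UNIV_eq_I mult_1_right)

lemma is_ideal_gen_ideal: "is_ideal (gen_ideal xs)"
  unfolding is_ideal_def gen_ideal_def
proof (intro conjI ballI allI; clarify?)
  show "\<exists>r. 0 = (\<Sum>i<length xs. r i * xs ! i)"
    by (rule exI[of _ "\<lambda>_. 0"]) simp
  show "\<exists>t. (\<Sum>i<length xs. r i * xs ! i) + (\<Sum>i<length xs. s i * xs ! i) = (\<Sum>i<length xs. t i * xs ! i)"
    for r s by (rule exI[of _ "\<lambda>i. r i + s i"]) (simp add: sum.distrib distrib_right)
  show "\<exists>t. c * (\<Sum>i<length xs. r i * xs ! i) = (\<Sum>i<length xs. t i * xs ! i)"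
    for c r by (rule exI[of _ "\<lambda>i. c * r i"]) (simp add: sum_distrib_left mult.assoc)
qed

lemma is_ideal_colon: "is_ideal I \<Longrightarrow> is_ideal {b. b * a \<in> I}"
  unfolding is_ideal_def by (auto simp: distrib_right mult.assoc)

lemma is_ideal_adjoin:
  assumes I: "is_ideal I"
  shows "is_ideal {m + r * a |m r. m \<in> I}"
  unfolding is_ideal_def
proof (intro conjI ballI allI)
  show "0 \<in> {m + r * a |m r. m \<in> I}"
    using is_ideal_zero[OF I] by (intro CollectI exI[of _ 0]) simp
  fix x y c assume "x \<in> {m + r * a |m r. m \<in> I}"
  then obtain m r where x: "x = m + r * a" "m \<in> I" by blast
  show "c * x \<in> {m + r * a |m r. m \<in> I}"
    using x is_ideal_mult_left[OF I x(2)]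
    by (intro CollectI exI[of _ "c * m"] exI[of _ "c * r"]) (simp add: algebra_simps)
  assume "y \<in> {m + r * a |m r. m \<in> I}"
  then obtain m' r' where y: "y = m' + r' * a" "m' \<in> I" by blast
  show "x + y \<in> {m + r * a |m r. m \<in> I}"
    using x y is_ideal_add[OF I x(2) y(2)]
    by (intro CollectI exI[of _ "m + m'"] exI[of _ "r + r'"]) (simp add: algebra_simps)
qed

lemma is_ideal_Union_chain:
  assumes "C \<noteq> {}" "\<And>I. I \<in> C \<Longrightarrow> is_ideal I" "\<And>I J. I \<in> C \<Longrightarrow> J \<in> C \<Longrightarrow> I \<subseteq> J \<or> J \<subseteq> I"
  shows "is_ideal (\<Union>C)"
  unfolding is_ideal_def
proof (intro conjI ballI allI)
  show "0 \<in> \<Union>C" using assms(1,2) by (auto simp: is_ideal_def)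
  show "a + b \<in> \<Union>C" if ab: "a \<in> \<Union>C" "b \<in> \<Union>C" for a b
  proof -
    obtain I J where "I \<in> C" "J \<in> C" "a \<in> I" "b \<in> J" using ab by blast
    then have "a \<in> I \<union> J" "b \<in> I \<union> J" "I \<union> J \<in> C"
      using assms(3)[of I J] by (auto simp: sup_absorb1 sup_absorb2)
    then show ?thesis using assms(2) unfolding is_ideal_def by blast
  qed
  show "r * a \<in> \<Union>C" if "a \<in> \<Union>C" for r a
    using that assms(2) unfolding is_ideal_def by blast
qed

lemma maximal_proper_ideal_prime:
  fixes M :: "'a::comm_ring_1 set"
  assumes M: "is_ideal M" "1 \<notin> M"
    and maximal: "\<And>X. is_ideal X \<Longrightarrow> M \<subseteq> X \<Longrightarrow> 1 \<notin> X \<Longrightarrow> X = M"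
  shows "prime_ideal M"
proof -
  have comaximal: "\<exists>m r. m \<in> M \<and> 1 = m + r * a" if "a \<notin> M" for a
  proof -
    let ?X = "{m + r * a |m r. m \<in> M}"
    have "m \<in> ?X" if "m \<in> M" for m
      using that by (intro CollectI exI[of _ m] exI[of _ 0]) simp
    moreover have "a \<in> ?X"
      using is_ideal_zero[OF M(1)] by (intro CollectI exI[of _ 0] exI[of _ 1]) simp
    ultimately have "1 \<in> ?X"
      using maximal[OF is_ideal_adjoin[OF M(1)]] that by blast
    then show ?thesis by blast
  qed
  have "a \<in> M \<or> b \<in> M" if ab: "a * b \<in> M" for a b
  proof (rule ccontr)
    assume "\<not> (a \<in> M \<or> b \<in> M)"
    then obtain m1 r1 m2 r2 where "m1 \<in> M" "m2 \<in> M" "1 = m1 + r1 * a" "1 = m2 + r2 * b"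
      using comaximal by blast
    then have "(1::'a) = (m1 + r1 * a) * (m2 + r2 * b)" by simp
    also have "\<dots> = m1 * (m2 + r2 * b) + r1 * (a * m2) + (r1 * r2) * (a * b)"
      by (simp add: algebra_simps)
    also have "\<dots> \<in> M"
      using \<open>m1 \<in> M\<close> \<open>m2 \<in> M\<close> ab
      by (intro is_ideal_add[OF M(1)] is_ideal_mult_right[OF M(1), of m1]
          is_ideal_mult_left[OF M(1), of "a * m2"] is_ideal_mult_left[OF M(1), of m2]
          is_ideal_mult_left[OF M(1), of "a * b"])
    finally show False using M(2) by blast
  qed
  then show ?thesis using M unfolding prime_ideal_def by blast
qed

lemma proper_ideal_subset_prime_ideal:
  fixes J :: "'a::comm_ring_1 set"
  assumes J: "is_ideal J" "1 \<notin> J"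
  obtains p where "prime_ideal p" "J \<subseteq> p"
proof -
  define A where "A = {I::'a set. is_ideal I \<and> J \<subseteq> I \<and> 1 \<notin> I}"
  have "\<forall>C\<in>chains A. \<exists>U\<in>A. \<forall>X\<in>C. X \<subseteq> U"
  proof
    fix C assume C: "C \<in> chains A"
    show "\<exists>U\<in>A. \<forall>X\<in>C. X \<subseteq> U"
    proof (cases "C = {}")
      case True
      then show ?thesis using J by (auto simp: A_def)
    next
      case False
      with C have "\<Union>C \<in> A"
        unfolding A_def chains_def chain_subset_def by (auto intro!: is_ideal_Union_chain)
      then show ?thesis by blast
    qed
  qed
  from Zorn_Lemma2[OF this] obtain M where M: "M \<in> A" and maximal: "\<forall>X\<in>A. M \<subseteq> X \<longrightarrow> X = M"
    by blast
  have "prime_ideal M"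
  proof (rule maximal_proper_ideal_prime)
    show "is_ideal M" "1 \<notin> M" using M by (simp_all add: A_def)
    show "X = M" if "is_ideal X" "M \<subseteq> X" "1 \<notin> X" for X
      using maximal M that by (auto simp: A_def)
  qed
  then show thesis using that M by (simp add: A_def)
qed

lemma kcycle_restrict_degree:
  assumes "\<And>T. T \<subseteq> {..<length xs} \<Longrightarrow> kdiff xs c T = 0"
  shows "kcycle xs i (\<lambda>S. if S \<subseteq> {..<length xs} \<and> card S = i then c S else 0)"
proof -
  have "kdiff xs (\<lambda>S. if S \<subseteq> {..<length xs} \<and> card S = i then c S else 0) T = 0" for T
  proof (cases "T \<subseteq> {..<length xs}")
    case True
    then have "finite T"
      using finite_subset by blast
    then have "card (insert j T) = Suc (card T)" if "j \<notin> T" for j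
      using that by simp
    then have "kdiff xs (\<lambda>S. if S \<subseteq> {..<length xs} \<and> card S = i then c S else 0) T =
        (if Suc (card T) = i then kdiff xs c T else 0)"
      using True unfolding kdiff_def by (auto intro!: sum.cong)
    then show ?thesis
      using assms True by simp
  qed (simp add: kdiff_def)
  then show ?thesis
    unfolding kcycle_def kchain_def by auto
qed

lemma cech_top_zero_iff_gen_ideal:
  "cech_top_zero xs r k \<longleftrightarrow>
    (\<exists>K t. prod_list xs ^ t * r * prod_list xs ^ K
      \<in> gen_ideal (map (\<lambda>y. prod_list xs ^ t * y ^ K * prod_list xs ^ k) xs))"
proof -
  define x where "x = prod_list xs"
  have distrib: "x ^ t * ((\<Sum>j<length xs. b j * xs ! j ^ K) * x ^ k) =
      (\<Sum>j<length xs. b j * (x ^ t * xs ! j ^ K * x ^ k))" for b K t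
    by (simp add: sum_distrib_left sum_distrib_right ac_simps)
  show ?thesis
    unfolding cech_top_zero_def gen_ideal_def x_def[symmetric]
    by (simp add: right_diff_distrib distrib mult.assoc flip: eq_iff_diff_eq_0) blast
qed

context
  fixes f :: "'a::comm_ring_1 \<Rightarrow> 'b::comm_ring_1"
  assumes hom: "ring_homo f"
begin

lemma hom_one: "f 1 = 1"
  and hom_add: "f (a + b) = f a + f b"
  and hom_mult: "f (a * b) = f a * f b"
  using hom unfolding ring_homo_def by blast+

lemma hom_zero: "f 0 = 0"
  using hom_add[of 0 0] by simp

lemma hom_uminus: "f (- a) = - f a"
  using hom_add[of a "- a"] by (simp add: hom_zero add_eq_0_iff)

lemma hom_sum: "f (sum g A) = (\<Sum>x\<in>A. f (g x))"
  by (induction A rule: infinite_finite_induct) (auto simp: hom_zero hom_add)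

lemma hom_prod: "f (prod g A) = (\<Prod>x\<in>A. f (g x))"
  by (induction A rule: infinite_finite_induct) (auto simp: hom_one hom_mult)

lemma hom_power: "f (a ^ n) = f a ^ n"
  by (induction n) (auto simp: hom_one hom_mult)

lemma hom_prod_list: "f (prod_list xs) = prod_list (map f xs)"
  by (induction xs) (auto simp: hom_one hom_mult)

lemma gen_ideal_map: "a \<in> gen_ideal xs \<Longrightarrow> f a \<in> gen_ideal (map f xs)"
  unfolding gen_ideal_def by (force simp: hom_sum hom_mult)

lemma seq_pow_map: "seq_pow (map f xs) n = map f (seq_pow xs n)"
  unfolding seq_pow_def by (simp add: hom_power)

lemma prime_ideal_vimage:
  assumes "prime_ideal q"
  shows "prime_ideal (f -` q)"
proof -
  have "is_ideal q" "1 \<notin> q"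
    using assms is_ideal_eq_UNIV_iff unfolding prime_ideal_def by blast+
  moreover have "1 \<notin> f -` q"
    using \<open>1 \<notin> q\<close> hom_one by simp
  ultimately show ?thesis
    using assms unfolding prime_ideal_def is_ideal_def by (auto simp: hom_zero hom_add hom_mult)
qed

lemma finite_family_hom_lincomb:
  assumes "finite I"
  shows "\<exists>N (B :: nat \<Rightarrow> 'i \<Rightarrow> 'a) w. \<forall>i\<in>I. z i = (\<Sum>k<N. f (B k i) * w k)"
proof -
  obtain h where h: "bij_betw h {..<card I} I"
    using ex_bij_betw_nat_finite[OF assms] by (auto simp: atLeast0LessThan)
  define B where "B = (\<lambda>k i. if h k = i then (1::'a) else 0)"
  have "z i = (\<Sum>k<card I. f (B k i) * z (h k))" if "i \<in> I" for i
  proof -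
    have "(\<Sum>k<card I. f (B k i) * z (h k)) = (\<Sum>k<card I. (\<lambda>i'. if i' = i then z i' else 0) (h k))"
      by (intro sum.cong) (auto simp: B_def hom_one hom_zero)
    also have "\<dots> = (\<Sum>i'\<in>I. if i' = i then z i' else 0)"
      by (rule sum.reindex_bij_betw[OF h])
    finally show ?thesis
      using that assms by simp
  qed
  then show ?thesis
    by (intro exI[of _ "card I"] exI[of _ B] exI[of _ "z \<circ> h"]) simp
qed

lemma kdiff_map_lincomb:
  "kdiff (map f xs) (\<lambda>S. \<Sum>k<N. f (c k S) * w k) = (\<lambda>T. \<Sum>k<N. f (kdiff xs (c k) T) * w k)"
proof
  fix T
  show "kdiff (map f xs) (\<lambda>S. \<Sum>k<N. f (c k S) * w k) T = (\<Sum>k<N. f (kdiff xs (c k) T) * w k)"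
  proof (cases "T \<subseteq> {..<length xs}")
    case True
    have "kdiff (map f xs) (\<lambda>S. \<Sum>k<N. f (c k S) * w k) T =
      (\<Sum>j\<in>{..<length xs} - T. (-1) ^ card {k\<in>T. k < j} * f (xs ! j) * (\<Sum>k<N. f (c k (insert j T)) * w k))"
      unfolding kdiff_def using True by (auto intro!: sum.cong)
    also have "\<dots> = (\<Sum>k<N. f (kdiff xs (c k) T) * w k)"
      unfolding kdiff_def using True
      by (simp add: hom_sum hom_mult hom_power hom_uminus hom_one sum_distrib_left sum_distrib_right
          mult.assoc sum.swap[of _ "{..<N}"])
    finally show ?thesis .
  qed (simp add: kdiff_def hom_zero)
qed

lemma kchain_map_lincomb:
  assumes "\<forall>k<N. kchain xs i (c k)"
  shows "kchain (map f xs) i (\<lambda>S. \<Sum>k<N. f (c k S) * w k)"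
  unfolding kchain_def
proof (intro allI impI)
  fix S assume "(\<Sum>k<N. f (c k S) * w k) \<noteq> 0"
  then obtain k where "k < N" "c k S \<noteq> 0"
    by (metis (no_types, lifting) hom_zero lessThan_iff mult_zero_left sum.neutral)
  then show "S \<subseteq> {..<length (map f xs)} \<and> card S = i"
    using assms unfolding kchain_def by simp
qed

lemma kboundary_map_lincomb:
  assumes "\<forall>k<N. kboundary xs i (b k)"
  shows "kboundary (map f xs) i (\<lambda>S. \<Sum>k<N. f (b k S) * w k)"
proof -
  obtain c where c: "\<forall>k<N. kchain xs (Suc i) (c k) \<and> b k = kdiff xs (c k)"
    using assms unfolding kboundary_def by metis
  then have "kchain (map f xs) (Suc i) (\<lambda>S. \<Sum>k<N. f (c k S) * w k)"
    by (intro kchain_map_lincomb) blast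
  moreover have "(\<lambda>S. \<Sum>k<N. f (b k S) * w k) = kdiff (map f xs) (\<lambda>S. \<Sum>k<N. f (c k S) * w k)"
    unfolding kdiff_map_lincomb using c by (auto intro!: sum.cong)
  ultimately show ?thesis
    unfolding kboundary_def by blast
qed

lemma kmap_map_lincomb:
  assumes "\<forall>k<N. kchain xs i (c k)"
  shows "kmap (map f xs) m n (\<lambda>S. \<Sum>k<N. f (c k S) * w k) = (\<lambda>S. \<Sum>k<N. f (kmap xs m n (c k) S) * w k)"
proof
  fix S
  show "kmap (map f xs) m n (\<lambda>S. \<Sum>k<N. f (c k S) * w k) S = (\<Sum>k<N. f (kmap xs m n (c k) S) * w k)"
  proof (cases "S \<subseteq> {..<length xs}")
    case True
    then have "(\<Prod>j\<in>S. map f xs ! j ^ (m - n)) = f (\<Prod>j\<in>S. xs ! j ^ (m - n))"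
      by (auto simp: hom_prod hom_power intro!: prod.cong)
    then show ?thesis
      unfolding kmap_def by (simp add: hom_mult sum_distrib_left mult.assoc)
  next
    case False
    then have "c k S = 0" if "k < N" for k
      using assms that unfolding kchain_def by blast
    then show ?thesis
      unfolding kmap_def by (simp add: hom_zero hom_mult)
  qed
qed

context
  assumes flat: "flat_hom f"
begin

lemma flat_hom_finite_system:
  fixes a :: "'e \<Rightarrow> 'j \<Rightarrow> 'a" and z :: "'i \<Rightarrow> 'b"
  assumes "finite E" "finite I" "\<forall>e\<in>E. finite (J e)" "\<forall>e\<in>E. \<forall>j\<in>J e. \<sigma> e j \<in> I"
    and "\<forall>e\<in>E. (\<Sum>j\<in>J e. f (a e j) * z (\<sigma> e j)) = 0"
  shows "\<exists>N (B :: nat \<Rightarrow> 'i \<Rightarrow> 'a) w. (\<forall>i\<in>I. z i = (\<Sum>k<N. f (B k i) * w k)) \<and>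
           (\<forall>k<N. \<forall>e\<in>E. (\<Sum>j\<in>J e. a e j * B k (\<sigma> e j)) = 0)"
  using assms(1,3-)
proof (induction E rule: finite_induct)
  case empty
  then show ?case
    using finite_family_hom_lincomb[OF \<open>finite I\<close>, of z] by blast
next
  case (insert e E)
  have "\<forall>e\<in>E. finite (J e)" "\<forall>e\<in>E. \<forall>j\<in>J e. \<sigma> e j \<in> I"
    "\<forall>e\<in>E. (\<Sum>j\<in>J e. f (a e j) * z (\<sigma> e j)) = 0"
    using insert.prems by auto
  from insert.IH[OF this] obtain N :: nat and B w where
    z: "\<forall>i\<in>I. z i = (\<Sum>k<N. f (B k i) * w k)" and
    B: "\<forall>k<N. \<forall>e\<in>E. (\<Sum>j\<in>J e. a e j * B k (\<sigma> e j)) = 0"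
    by blast
  define a' where "a' k = (\<Sum>j\<in>J e. a e j * B k (\<sigma> e j))" for k
  have "0 = (\<Sum>j\<in>J e. f (a e j) * z (\<sigma> e j))" using insert.prems by auto
  also have "\<dots> = (\<Sum>j\<in>J e. f (a e j) * (\<Sum>k<N. f (B k (\<sigma> e j)) * w k))"
    using insert.prems z by (intro sum.cong) auto
  also have "\<dots> = (\<Sum>k<N. f (a' k) * w k)"
    unfolding a'_def hom_sum hom_mult
    by (simp add: sum_distrib_left sum_distrib_right mult.assoc sum.swap[of _ "J e"])
  finally have "(\<Sum>k<N. f (a' k) * w k) = 0" by simp
  \<comment> \<open>the new equation is a relation among the \<open>w k\<close>; flatness splits it and refines B\<close>
  then obtain N' :: nat and C v where w: "\<forall>k<N. w k = (\<Sum>l<N'. f (C k l) * v l)"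
    and C: "\<forall>l<N'. (\<Sum>k<N. a' k * C k l) = 0"
    using flat unfolding flat_hom_def by blast
  define B' where "B' l i = (\<Sum>k<N. B k i * C k l)" for l i
  have "z i = (\<Sum>l<N'. f (B' l i) * v l)" if "i \<in> I" for i
  proof -
    have "z i = (\<Sum>k<N. f (B k i) * (\<Sum>l<N'. f (C k l) * v l))"
      using z w that by simp
    then show ?thesis
      unfolding B'_def hom_sum hom_mult
      by (simp add: sum_distrib_left sum_distrib_right mult.assoc sum.swap[of _ "{..<N}"])
  qed
  moreover have "(\<Sum>j\<in>J e'. a e' j * B' l (\<sigma> e' j)) = 0" if "l < N'" "e' \<in> insert e E" for l e'
  proof -
    have "(\<Sum>j\<in>J e'. a e' j * B' l (\<sigma> e' j)) = (\<Sum>k<N. (\<Sum>j\<in>J e'. a e' j * B k (\<sigma> e' j)) * C k l)"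
      unfolding B'_def
      by (simp add: sum_distrib_left sum_distrib_right mult.assoc sum.swap[of _ "{..<N}"])
    then show ?thesis
      using B C that by (auto simp: a'_def)
  qed
  ultimately show ?case by blast
qed

lemma flat_hom_colon:
  assumes "f a * v \<in> gen_ideal (map f ys)"
  obtains N :: nat and \<beta> z where "v = (\<Sum>j<N. f (\<beta> j) * z j)" "\<forall>j<N. \<beta> j * a \<in> gen_ideal ys"
proof -
  define l where "l = length ys"
  obtain s where s: "f a * v = (\<Sum>i<l. s i * f (ys ! i))"
    using assms unfolding gen_ideal_def l_def by auto
  \<comment> \<open>the relation \<open>a v - y_1 s_1 - ... - y_l s_l = 0\<close>, whose coefficients lie in R\<close>
  define a' where "a' i = (if i = 0 then a else - (ys ! (i - 1)))" for i
  define v' where "v' i = (if i = 0 then v else s (i - 1))" for i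
  have "(\<Sum>i<Suc l. f (a' i) * v' i) = f a * v - (\<Sum>i<l. s i * f (ys ! i))"
    by (simp add: sum.lessThan_Suc_shift a'_def v'_def hom_uminus sum_negf mult.commute del: sum.lessThan_Suc)
  then have "(\<Sum>i<Suc l. f (a' i) * v' i) = 0"
    using s by simp
  then obtain N :: nat and \<beta> z where v: "\<forall>i<Suc l. v' i = (\<Sum>j<N. f (\<beta> i j) * z j)"
    and \<beta>: "\<forall>j<N. (\<Sum>i<Suc l. a' i * \<beta> i j) = 0"
    using flat unfolding flat_hom_def by blast
  have "\<beta> 0 j * a \<in> gen_ideal ys" if "j < N" for j
  proof -
    have "\<beta> 0 j * a - (\<Sum>i<l. \<beta> (Suc i) j * ys ! i) = (\<Sum>i<Suc l. a' i * \<beta> i j)"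
      by (simp add: sum.lessThan_Suc_shift a'_def sum_negf mult.commute del: sum.lessThan_Suc)
    then have "\<beta> 0 j * a = (\<Sum>i<l. \<beta> (Suc i) j * ys ! i)"
      using \<beta> that by simp
    then show ?thesis
      unfolding gen_ideal_def l_def by (intro CollectI exI[of _ "\<lambda>i. \<beta> (Suc i) j"])
  qed
  moreover have "v = (\<Sum>j<N. f (\<beta> 0 j) * z j)"
    using v by (auto simp: v'_def)
  ultimately show thesis
    using that by blast
qed

lemma kcycle_map_decompose:
  assumes "kcycle (map f xs) i z"
  obtains N :: nat and c w where "\<forall>k<N. kcycle xs i (c k)" "z = (\<lambda>S. \<Sum>k<N. f (c k S) * w k)"
proof -
  define l where "l = length xs"
  define P where "P = {S. S \<subseteq> {..<l}}"
  define sgn where "sgn T j = (-1) ^ card {k\<in>T. k < j} * xs ! j" for T j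
  have finite_P: "finite P"
    unfolding P_def by simp
  have "(\<Sum>j\<in>{..<l} - T. f (sgn T j) * z (insert j T)) = kdiff (map f xs) z T" if "T \<in> P" for T
    using that unfolding kdiff_def P_def sgn_def l_def
    by (auto simp: hom_mult hom_power hom_uminus hom_one intro!: sum.cong)
  \<comment> \<open>the cycle condition is a finite system of linear equations over R satisfied by z\<close>
  then obtain N :: nat and B w where z: "\<forall>S\<in>P. z S = (\<Sum>k<N. f (B k S) * w k)"
    and B: "\<forall>k<N. \<forall>T\<in>P. (\<Sum>j\<in>{..<l} - T. sgn T j * B k (insert j T)) = 0"
    using assms flat_hom_finite_system[OF finite_P finite_P, of "\<lambda>T. {..<l} - T" "\<lambda>T j. insert j T" sgn z]
    unfolding kcycle_def P_def by auto
  define c where "c k = (\<lambda>S. if S \<subseteq> {..<l} \<and> card S = i then B k S else 0)" for k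
  have "kcycle xs i (c k)" if "k < N" for k
  proof -
    have "kdiff xs (B k) T = 0" if "T \<subseteq> {..<l}" for T
      using B \<open>k < N\<close> that unfolding kdiff_def P_def sgn_def l_def by (simp add: mult.assoc)
    then show ?thesis
      unfolding c_def l_def by (rule kcycle_restrict_degree)
  qed
  moreover have "z = (\<lambda>S. \<Sum>k<N. f (c k S) * w k)"
  proof
    fix S
    show "z S = (\<Sum>k<N. f (c k S) * w k)"
    proof (cases "S \<subseteq> {..<l} \<and> card S = i")
      case True
      then show ?thesis using z by (simp add: c_def P_def)
    next
      case False
      then have "z S = 0"
        using assms unfolding kcycle_def kchain_def l_def by auto
      moreover have "c k S = 0" for k
        using False by (auto simp: c_def)
      ultimately show ?thesis by (simp add: hom_zero)
    qed
  qed
  ultimately show thesis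
    using that by blast
qed

lemma weakly_proregular_map:
  assumes "weakly_proregular xs"
  shows "weakly_proregular (map f xs)"
  unfolding weakly_proregular_def
proof
  fix n
  obtain m where "m \<ge> n" and zero: "\<forall>i\<ge>1. koszul_hom_map_zero xs m n i"
    using assms unfolding weakly_proregular_def by blast
  have "koszul_hom_map_zero (map f xs) m n i" if "i \<ge> 1" for i
    unfolding koszul_hom_map_zero_def
  proof (intro allI impI)
    fix z assume "kcycle (seq_pow (map f xs) m) i z"
    then obtain N :: nat and c w where c: "\<forall>k<N. kcycle (seq_pow xs m) i (c k)"
      and z: "z = (\<lambda>S. \<Sum>k<N. f (c k S) * w k)"
      unfolding seq_pow_map by (rule kcycle_map_decompose)
    have "\<forall>k<N. kchain xs i (c k)"
      using c unfolding kcycle_def kchain_def by (simp add: seq_pow_def)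
    then have "kmap (map f xs) m n z = (\<lambda>S. \<Sum>k<N. f (kmap xs m n (c k) S) * w k)"
      unfolding z by (rule kmap_map_lincomb)
    moreover have "\<forall>k<N. kboundary (seq_pow xs n) i (kmap xs m n (c k))"
      using zero c \<open>i \<ge> 1\<close> unfolding koszul_hom_map_zero_def by blast
    ultimately show "kboundary (seq_pow (map f xs) n) i (kmap (map f xs) m n z)"
      unfolding seq_pow_map by (simp add: kboundary_map_lincomb)
  qed
  then show "\<exists>m\<ge>n. \<forall>i\<ge>1. koszul_hom_map_zero (map f xs) m n i"
    using \<open>m \<ge> n\<close> by blast
qed

lemma cech_top_zero_map_colon:
  assumes "cech_top_zero (map f ys) (v * f r) k"
  obtains N :: nat and \<beta> z where "v = (\<Sum>j<N. f (\<beta> j) * z j)" "\<forall>j<N. cech_top_zero ys (\<beta> j * r) k"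
proof -
  define x where "x = prod_list ys"
  obtain K t where
    "f x ^ t * (v * f r) * f x ^ K \<in> gen_ideal (map (\<lambda>y. f x ^ t * y ^ K * f x ^ k) (map f ys))"
    using assms unfolding cech_top_zero_iff_gen_ideal x_def hom_prod_list by blast
  moreover have "f (x ^ t * r * x ^ K) * v = f x ^ t * (v * f r) * f x ^ K"
    by (simp add: hom_mult hom_power ac_simps)
  moreover have "map (\<lambda>y. f x ^ t * y ^ K * f x ^ k) (map f ys) = map f (map (\<lambda>y. x ^ t * y ^ K * x ^ k) ys)"
    by (simp add: hom_mult hom_power)
  ultimately have "f (x ^ t * r * x ^ K) * v \<in> gen_ideal (map f (map (\<lambda>y. x ^ t * y ^ K * x ^ k) ys))"
    by (simp only:)
  then obtain N :: nat and \<beta> z where v: "v = (\<Sum>j<N. f (\<beta> j) * z j)"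
    and \<beta>: "\<forall>j<N. \<beta> j * (x ^ t * r * x ^ K) \<in> gen_ideal (map (\<lambda>y. x ^ t * y ^ K * x ^ k) ys)"
    by (rule flat_hom_colon)
  have "cech_top_zero ys (\<beta> j * r) k" if "j < N" for j
  proof -
    have reorder: "x ^ t * (\<beta> j * r) * x ^ K = \<beta> j * (x ^ t * r * x ^ K)"
      by (simp add: ac_simps)
    have "x ^ t * (\<beta> j * r) * x ^ K \<in> gen_ideal (map (\<lambda>y. x ^ t * y ^ K * x ^ k) ys)"
      using \<beta> that unfolding reorder by simp
    then show ?thesis
      unfolding cech_top_zero_iff_gen_ideal x_def by blast
  qed
  then show thesis
    using that v by blast
qed

lemma cech_top_local_nonzero_map:
  assumes q: "prime_ideal q" and nonzero: "cech_top_local_nonzero ys (f -` q)"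
  shows "cech_top_local_nonzero (map f ys) q"
proof -
  obtain r k where r: "\<And>u. f u \<notin> q \<Longrightarrow> \<not> cech_top_zero ys (u * r) k"
    using nonzero unfolding cech_top_local_nonzero_def by auto
  have "\<not> cech_top_zero (map f ys) (v * f r) k" if "v \<notin> q" for v
  proof
    assume "cech_top_zero (map f ys) (v * f r) k"
    then obtain N :: nat and \<beta> z where v: "v = (\<Sum>j<N. f (\<beta> j) * z j)"
      and zero: "\<forall>j<N. cech_top_zero ys (\<beta> j * r) k"
      by (rule cech_top_zero_map_colon)
    obtain j where "j < N" "f (\<beta> j) \<notin> q"
      using v \<open>v \<notin> q\<close> is_ideal_lincomb[of q N "\<lambda>j. f (\<beta> j)" z] q
      unfolding prime_ideal_def by blast
    then show False
      using r zero by blast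
  qed
  then show ?thesis
    unfolding cech_top_local_nonzero_def by blast
qed

context
  assumes lying_over: "\<forall>p. prime_ideal p \<longrightarrow> (\<exists>q. prime_ideal q \<and> f -` q = p)"
begin

lemma gen_ideal_map_iff: "f a \<in> gen_ideal (map f ys) \<longleftrightarrow> a \<in> gen_ideal ys"
proof
  assume "f a \<in> gen_ideal (map f ys)"
  then have "f a * 1 \<in> gen_ideal (map f ys)"
    by simp
  then obtain N :: nat and \<beta> z where one: "1 = (\<Sum>j<N. f (\<beta> j) * z j)"
    and \<beta>: "\<forall>j<N. \<beta> j * a \<in> gen_ideal ys"
    by (rule flat_hom_colon)
  show "a \<in> gen_ideal ys"
  proof (rule ccontr)
    assume "a \<notin> gen_ideal ys"
    then obtain p where p: "prime_ideal p" "{b. b * a \<in> gen_ideal ys} \<subseteq> p"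
      using proper_ideal_subset_prime_ideal[OF is_ideal_colon[OF is_ideal_gen_ideal]] by auto
    then obtain q where q: "prime_ideal q" "f -` q = p"
      using lying_over by blast
    then have "is_ideal q" "1 \<notin> q"
      using is_ideal_eq_UNIV_iff unfolding prime_ideal_def by blast+
    moreover have "(\<Sum>j<N. f (\<beta> j) * z j) \<in> q"
      using \<beta> p(2) q(2) by (intro is_ideal_lincomb[OF \<open>is_ideal q\<close>]) auto
    ultimately show False
      using one by simp
  qed
qed (rule gen_ideal_map)

lemma gen_ideal_map_eq_UNIV_iff: "gen_ideal (map f ys) = UNIV \<longleftrightarrow> gen_ideal ys = UNIV"
  using gen_ideal_map_iff[of 1 ys] by (simp add: hom_one is_ideal_eq_UNIV_iff[OF is_ideal_gen_ideal])

lemma parameter_seq_map: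
  assumes "parameter_seq ys"
  shows "parameter_seq (map f ys)"
proof (cases "ys = []")
  case False
  then have "weakly_proregular ys" "gen_ideal ys \<noteq> UNIV"
    and nonzero: "\<And>p. prime_ideal p \<Longrightarrow> gen_ideal ys \<subseteq> p \<Longrightarrow> cech_top_local_nonzero ys p"
    using assms unfolding parameter_seq_def by auto
  moreover have "cech_top_local_nonzero (map f ys) q"
    if "prime_ideal q" "gen_ideal (map f ys) \<subseteq> q" for q
  proof -
    have "gen_ideal ys \<subseteq> f -` q"
      using gen_ideal_map that(2) by blast
    then show ?thesis
      using cech_top_local_nonzero_map nonzero prime_ideal_vimage that(1) by blast
  qed
  ultimately show ?thesis
    unfolding parameter_seq_def by (simp add: weakly_proregular_map gen_ideal_map_eq_UNIV_iff)
qed (simp add: parameter_seq_def)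

lemma strong_parameter_seq_map: "strong_parameter_seq xs \<Longrightarrow> strong_parameter_seq (map f xs)"
  unfolding strong_parameter_seq_def by (simp add: parameter_seq_map take_map)

lemma regular_seq_reflect:
  assumes "regular_seq (map f xs)"
  shows "regular_seq xs"
  unfolding regular_seq_def
proof (intro conjI allI impI)
  fix i a assume "i < length xs" "xs ! i * a \<in> gen_ideal (take i xs)"
  then have "map f xs ! i * f a \<in> gen_ideal (take i (map f xs))"
    using gen_ideal_map by (fastforce simp: hom_mult take_map)
  then have "f a \<in> gen_ideal (map f (take i xs))"
    using assms \<open>i < length xs\<close> unfolding regular_seq_def by (simp add: take_map)
  then show "a \<in> gen_ideal (take i xs)"
    by (simp add: gen_ideal_map_iff)
next
  show "gen_ideal xs \<noteq> UNIV"
    using assms unfolding regular_seq_def by (simp add: gen_ideal_map_eq_UNIV_iff)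
qed

end

end

end

theorem proposition4p5:
  fixes f :: "'a::comm_ring_1 \<Rightarrow> 'b::comm_ring_1"
  assumes "faithfully_flat_hom f"
    and "cohen_macaulay TYPE('b)"
  shows "cohen_macaulay TYPE('a)"
  unfolding cohen_macaulay_def
proof (intro allI impI)
  have f: "ring_homo f" "flat_hom f" "\<forall>p. prime_ideal p \<longrightarrow> (\<exists>q. prime_ideal q \<and> f -` q = p)"
    using assms(1) unfolding faithfully_flat_hom_def by auto
  fix xs :: "'a list"
  assume "strong_parameter_seq xs"
  then have "strong_parameter_seq (map f xs)"
    by (rule strong_parameter_seq_map[OF f])
  then have "regular_seq (map f xs)"
    using assms(2) unfolding cohen_macaulay_def by blast
  then show "regular_seq xs"
    by (rule regular_seq_reflect[OF f])
qed

end
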